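(* Let $m+n\ge 3$ and let $\psi:\mathfrak{stl}(m,n,\mathcal A)\to\mathfrak{sl}(m,n,\mathcal A)$ be the homomorphism with $\psi(v_{ij}(a))=E_{ij}(a)$. Then $\operatorname{Ker}\psi\subseteq H$.
   Context: Standing assumptions: $K$ is a field with $\operatorname{char}K\ne 2,3$, and $\mathcal A$ is an associative unital $K$-algebra. For $1\le i,j\le m+n$ put $\tau_{ij}=0$ if $i,j\le m$ or $i,j\ge m+1$, and $\tau_{ij}=1$ otherwise. A Leibniz superalgebra is a $\mathbb Z_2$-graded $K$-space with a bilinear bracket respecting the grading and satisfying $[[a,b],c]=[a,[b,c]]-(-1)^{|a||b|}[b,[a,c]]$. $\mathfrak{gl}(m,n,\mathcal A)$: $(m+n)\times(m+n)$ matrices over $\mathcal A$, matrix unit $E_{ij}(a)$ of degree $\tau_{ij}$, bracket $[X,Y]=XY-(-1)^{\alpha\beta}YX$. $\mathfrak{sl}(m,n,\mathcal A)$ is the subsuperalgebra generated by the $E_{ij}(a)$, $i\ne j$. $\mathfrak{stl}(m,n,\mathcal A)$ is the Leibniz superalgebra generated by $v_{ij}(a)$, $1\le i\ne j\le m+n$, $a\in\mathcal A$, of degree $\tau_{ij}$, subject to: (1) $K$-linearity in $a$; (2) $[v_{ij}(a),v_{kl}(b)]=0$ if $i\ne l$, $j\ne k$; (3) $[v_{ij}(a),v_{kl}(b)]=v_{il}(ab)$ if $i\ne l$, $j=k$; (4) $[v_{ij}(a),v_{kl}(b)]=-(-1)^{\tau_{ij}\tau_{kl}}v_{kj}(ba)$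 if $i=l$, $j\ne k$. For $i\ne j$, $H_{ij}(a,b)=[v_{ij}(a),v_{ji}(b)]$, and $H$ is the $K$-span of all $H_{ij}(a,b)$. *)

theory Defs
  imports Main "HOL.Vector_Spaces"
begin

text \<open>Parity of the matrix unit position (i,j) in gl(m,n,A):
  0 if both indices are \<le> m or both are \<ge> m+1, and 1 otherwise.\<close>
definition tau :: "nat \<Rightarrow> nat \<Rightarrow> nat \<Rightarrow> nat" where
  "tau m i j = (if (i \<le> m) = (j \<le> m) then 0 else 1)"

datatype ('k, 'a) lterm =
    Gen nat nat 'a
  | Zero
  | Add "('k, 'a) lterm" "('k, 'a) lterm"
  | Smul 'k "('k, 'a) lterm"
  | Br "('k, 'a) lterm" "('k, 'a) lterm"

definition valid_idx :: "nat \<Rightarrow> nat \<Rightarrow> nat \<Rightarrow> nat \<Rightarrow> bool" where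
  "valid_idx m n i j \<longleftrightarrow> 1 \<le> i \<and> i \<le> m + n \<and> 1 \<le> j \<and> j \<le> m + n \<and> i \<noteq> j"

fun wf_term :: "nat \<Rightarrow> nat \<Rightarrow> ('k, 'a) lterm \<Rightarrow> bool" where
  "wf_term m n (Gen i j a) = valid_idx m n i j"
| "wf_term m n Zero = True"
| "wf_term m n (Add x y) = (wf_term m n x \<and> wf_term m n y)"
| "wf_term m n (Smul c x) = wf_term m n x"
| "wf_term m n (Br x y) = (wf_term m n x \<and> wf_term m n y)"

fun monomial :: "('k, 'a) lterm \<Rightarrow> bool" where
  "monomial (Gen i j a) = True"
| "monomial (Br x y) = (monomial x \<and> monomial y)"
| "monomial _ = False"

fun deg :: "nat \<Rightarrow> ('k, 'a) lterm \<Rightarrow> nat" where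
  "deg m (Gen i j a) = tau m i j"
| "deg m (Br x y) = (deg m x + deg m y) mod 2"
| "deg m _ = 0"

text \<open>The defining congruence of stl(m,n,A): the smallest congruence making the term
  algebra a K-vector space with a bilinear bracket satisfying the graded Leibniz identity
  (imposed on homogeneous monomials, which suffices by trilinearity) and the relations
  (1)-(4).  stl(m,n,A) is the quotient of the terms by this congruence.\<close>
inductive stl_eq :: "nat \<Rightarrow> nat \<Rightarrow> ('k \<Rightarrow> 'a \<Rightarrow> 'a) \<Rightarrow>
    ('k::field, 'a::ring_1) lterm \<Rightarrow> ('k, 'a) lterm \<Rightarrow> bool"
  for m n :: nat and smult :: "'k \<Rightarrow> 'a \<Rightarrow> 'a" where
  refl: "stl_eq m n smult x x"
| sym: "stl_eq m n smult x y \<Longrightarrow> stl_eq m n smult y x"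
| trans: "stl_eq m n smult x y \<Longrightarrow> stl_eq m n smult y z \<Longrightarrow> stl_eq m n smult x z"
| cong_add: "stl_eq m n smult x x' \<Longrightarrow> stl_eq m n smult y y' \<Longrightarrow>
     stl_eq m n smult (Add x y) (Add x' y')"
| cong_smul: "stl_eq m n smult x x' \<Longrightarrow> stl_eq m n smult (Smul c x) (Smul c x')"
| cong_br: "stl_eq m n smult x x' \<Longrightarrow> stl_eq m n smult y y' \<Longrightarrow>
     stl_eq m n smult (Br x y) (Br x' y')"
| add_assoc: "stl_eq m n smult (Add (Add x y) z) (Add x (Add y z))"
| add_comm: "stl_eq m n smult (Add x y) (Add y x)"
| add_zero: "stl_eq m n smult (Add x Zero) x"
| add_neg: "stl_eq m n smult (Add x (Smul (-1) x)) Zero"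
| smul_add: "stl_eq m n smult (Smul c (Add x y)) (Add (Smul c x) (Smul c y))"
| add_smul: "stl_eq m n smult (Smul (c + d) x) (Add (Smul c x) (Smul d x))"
| smul_smul: "stl_eq m n smult (Smul c (Smul d x)) (Smul (c * d) x)"
| smul_one: "stl_eq m n smult (Smul 1 x) x"
| br_add_left: "stl_eq m n smult (Br (Add x y) z) (Add (Br x z) (Br y z))"
| br_add_right: "stl_eq m n smult (Br x (Add y z)) (Add (Br x y) (Br x z))"
| br_smul_left: "stl_eq m n smult (Br (Smul c x) y) (Smul c (Br x y))"
| br_smul_right: "stl_eq m n smult (Br x (Smul c y)) (Smul c (Br x y))"
| leibniz: "monomial a \<Longrightarrow> monomial b \<Longrightarrow> monomial c \<Longrightarrow>
     stl_eq m n smult (Br (Br a b) c)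
       (Add (Br a (Br b c)) (Smul (- ((-1) ^ (deg m a * deg m b))) (Br b (Br a c))))"
| rel1_add: "valid_idx m n i j \<Longrightarrow>
     stl_eq m n smult (Gen i j (a + b)) (Add (Gen i j a) (Gen i j b))"
| rel1_smul: "valid_idx m n i j \<Longrightarrow>
     stl_eq m n smult (Gen i j (smult c a)) (Smul c (Gen i j a))"
| rel2: "valid_idx m n i j \<Longrightarrow> valid_idx m n k l \<Longrightarrow> i \<noteq> l \<Longrightarrow> j \<noteq> k \<Longrightarrow>
     stl_eq m n smult (Br (Gen i j a) (Gen k l b)) Zero"
| rel3: "valid_idx m n i j \<Longrightarrow> valid_idx m n k l \<Longrightarrow> i \<noteq> l \<Longrightarrow> j = k \<Longrightarrow>
     stl_eq m n smult (Br (Gen i j a) (Gen k l b)) (Gen i l (a * b))"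
| rel4: "valid_idx m n i j \<Longrightarrow> valid_idx m n k l \<Longrightarrow> i = l \<Longrightarrow> j \<noteq> k \<Longrightarrow>
     stl_eq m n smult (Br (Gen i j a) (Gen k l b))
       (Smul (- ((-1) ^ (tau m i j * tau m k l))) (Gen k j (b * a)))"

text \<open>Matrices in gl(m,n,A): entries indexed by 1..m+n (functions nat \<Rightarrow> nat \<Rightarrow> 'a).
  Super bracket, extended bilinearly from homogeneous matrices:
  [X,Y]_{ik} = \<Sum>_j X_ij Y_jk - (-1)^{tau(j,k) tau(i,j)} Y_ij X_jk.\<close>
definition sbr :: "nat \<Rightarrow> nat \<Rightarrow> (nat \<Rightarrow> nat \<Rightarrow> 'a::ring_1) \<Rightarrow> (nat \<Rightarrow> nat \<Rightarrow> 'a)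
    \<Rightarrow> nat \<Rightarrow> nat \<Rightarrow> 'a" where
  "sbr m n X Y = (\<lambda>i k. \<Sum>j\<in>{1..m+n}.
      X i j * Y j k - (-1) ^ (tau m j k * tau m i j) * (Y i j * X j k))"

definition unit_mat :: "nat \<Rightarrow> nat \<Rightarrow> 'a::zero \<Rightarrow> nat \<Rightarrow> nat \<Rightarrow> 'a" where
  "unit_mat i j a = (\<lambda>p q. if p = i \<and> q = j then a else 0)"

fun psi :: "nat \<Rightarrow> nat \<Rightarrow> ('k \<Rightarrow> 'a \<Rightarrow> 'a) \<Rightarrow> ('k, 'a::ring_1) lterm \<Rightarrow> nat \<Rightarrow> nat \<Rightarrow> 'a" where
  "psi m n smult (Gen i j a) = unit_mat i j a"
| "psi m n smult Zero = (\<lambda>p q. 0)"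
| "psi m n smult (Add x y) = (\<lambda>p q. psi m n smult x p q + psi m n smult y p q)"
| "psi m n smult (Smul c x) = (\<lambda>p q. smult c (psi m n smult x p q))"
| "psi m n smult (Br x y) = sbr m n (psi m n smult x) (psi m n smult y)"

inductive_set Hspan :: "nat \<Rightarrow> nat \<Rightarrow> ('k, 'a) lterm set" for m n :: nat where
  H_gen: "valid_idx m n i j \<Longrightarrow> Br (Gen i j a) (Gen j i b) \<in> Hspan m n"
| H_zero: "Zero \<in> Hspan m n"
| H_add: "x \<in> Hspan m n \<Longrightarrow> y \<in> Hspan m n \<Longrightarrow> Add x y \<in> Hspan m n"
| H_smul: "x \<in> Hspan m n \<Longrightarrow> Smul c x \<in> Hspan m n"

definition Kalgebra :: "('k::field \<Rightarrow> 'a::ring_1 \<Rightarrow> 'a) \<Rightarrow> bool" where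
  "Kalgebra smult \<longleftrightarrow> module smult \<and>
     (\<forall>c x y. smult c (x * y) = smult c x * y \<and> smult c (x * y) = x * smult c y)"

end

theory Submission
  imports Defs
begin

text \<open>Relations (2)--(4) and the Leibniz identity show that the span of the generators
  \<open>v\<^sub>i\<^sub>j(a)\<close> and of the \<open>H\<^sub>i\<^sub>j(a,b)\<close> is closed under brackets, hence is all of
  \<open>stl(m,n,A)\<close>.  The only brackets not handled directly are those of \<open>H\<^sub>i\<^sub>j\<close> with
  \<open>v\<^sub>i\<^sub>j\<close> or \<open>v\<^sub>j\<^sub>i\<close>; for them \<open>H\<^sub>i\<^sub>j\<close> is first rewritten through a third index,
  which exists because \<open>m + n \<ge> 3\<close>.  So every element is \<open>\<Sum> v\<^sub>i\<^sub>j(a\<^sub>i\<^sub>j) + h\<close> with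
  \<open>h \<in> H\<close>.  Since \<open>\<psi>\<close> is well defined (the matrix super bracket satisfies the graded
  Leibniz identity on homogeneous matrices) and maps \<open>H\<close> to diagonal matrices, \<open>\<psi>(x) = 0\<close>
  forces every \<open>a\<^sub>i\<^sub>j = 0\<close>, i.e. \<open>x \<equiv> h\<close>.\<close>

section \<open>The super bracket on homogeneous matrices\<close>

lemma tau_trans: "tau m i k = (tau m i j + tau m j k) mod 2"
  by (simp add: tau_def)

definition mat_mult :: "nat \<Rightarrow> (nat \<Rightarrow> nat \<Rightarrow> 'a::ring_1) \<Rightarrow> (nat \<Rightarrow> nat \<Rightarrow> 'a)
    \<Rightarrow> nat \<Rightarrow> nat \<Rightarrow> 'a" where
  "mat_mult N X Y = (\<lambda>i k. \<Sum>j\<in>{1..N}. X i j * Y j k)"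

definition homogeneous :: "nat \<Rightarrow> nat \<Rightarrow> (nat \<Rightarrow> nat \<Rightarrow> 'a::zero) \<Rightarrow> bool" where
  "homogeneous m d X \<longleftrightarrow> (\<forall>i j. X i j \<noteq> 0 \<longrightarrow> tau m i j = d)"

lemma neg1_power_commute: "x * (-1::'a::ring_1) ^ e = (-1) ^ e * x"
  by (cases "even e") auto

lemma sbr_homogeneous:
  assumes "homogeneous m \<alpha> X" "homogeneous m \<beta> Y"
  shows "sbr m n X Y =
    (\<lambda>i k. mat_mult (m+n) X Y i k - (-1) ^ (\<alpha> * \<beta>) * mat_mult (m+n) Y X i k)"
proof (intro ext)
  fix i k
  have "(-1) ^ (tau m j k * tau m i j) * (Y i j * X j k) = (-1) ^ (\<alpha> * \<beta>) * (Y i j * X j k)"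
    for j
  proof (cases "Y i j = 0 \<or> X j k = 0")
    case False
    then have "tau m i j = \<beta>" "tau m j k = \<alpha>"
      using assms unfolding homogeneous_def by auto
    then show ?thesis by (simp add: mult.commute)
  qed auto
  then show "sbr m n X Y i k = mat_mult (m+n) X Y i k - (-1) ^ (\<alpha> * \<beta>) * mat_mult (m+n) Y X i k"
    unfolding sbr_def mat_mult_def by (simp add: sum_subtractf sum_distrib_left)
qed

lemma homogeneous_mat_mult:
  assumes "homogeneous m \<alpha> X" "homogeneous m \<beta> Y"
  shows "homogeneous m ((\<alpha> + \<beta>) mod 2) (mat_mult N X Y)"
  unfolding homogeneous_def
proof (intro allI impI)
  fix i k assume "mat_mult N X Y i k \<noteq> 0"
  then obtain j where "X i j * Y j k \<noteq> 0"
    unfolding mat_mult_def by (meson sum.neutral)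
  then have "X i j \<noteq> 0" "Y j k \<noteq> 0"
    by auto
  then have "tau m i j = \<alpha>" "tau m j k = \<beta>"
    using assms unfolding homogeneous_def by auto
  then show "tau m i k = (\<alpha> + \<beta>) mod 2"
    using tau_trans[of m i k j] by simp
qed

lemma homogeneous_sbr:
  assumes "homogeneous m \<alpha> X" "homogeneous m \<beta> Y"
  shows "homogeneous m ((\<alpha> + \<beta>) mod 2) (sbr m n X Y)"
proof -
  have XY: "homogeneous m ((\<alpha> + \<beta>) mod 2) (mat_mult (m+n) X Y)"
    and YX: "homogeneous m ((\<alpha> + \<beta>) mod 2) (mat_mult (m+n) Y X)"
    using homogeneous_mat_mult[OF assms] homogeneous_mat_mult[OF assms(2,1)]
    by (simp_all add: add.commute)
  show ?thesis
    unfolding sbr_homogeneous[OF assms] homogeneous_def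
  proof (intro allI impI)
    fix i k
    assume "mat_mult (m+n) X Y i k - (-1) ^ (\<alpha> * \<beta>) * mat_mult (m+n) Y X i k \<noteq> 0"
    then have "mat_mult (m+n) X Y i k \<noteq> 0 \<or> mat_mult (m+n) Y X i k \<noteq> 0"
      by auto
    then show "tau m i k = (\<alpha> + \<beta>) mod 2"
      using XY YX unfolding homogeneous_def by blast
  qed
qed

lemma mat_mult_assoc: "mat_mult N (mat_mult N X Y) Z = mat_mult N X (mat_mult N Y Z)"
  unfolding mat_mult_def
  by (auto intro!: ext simp: sum_distrib_left sum_distrib_right mult.assoc intro: sum.swap)

lemma mat_mult_diff_left:
  "mat_mult N (\<lambda>i k. A i k - c * B i k) C = (\<lambda>i k. mat_mult N A C i k - c * mat_mult N B C i k)"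
  unfolding mat_mult_def by (auto intro!: ext simp: sum_subtractf sum_distrib_left algebra_simps)

lemma mat_mult_diff_right:
  "mat_mult N A (\<lambda>i k. B i k - (-1) ^ e * C i k)
     = (\<lambda>i k. mat_mult N A B i k - (-1) ^ e * mat_mult N A C i k)"
  unfolding mat_mult_def
  by (auto intro!: ext simp: sum_subtractf sum_distrib_left right_diff_distrib
      mult.assoc[symmetric] neg1_power_commute)

lemma sbr_leibniz:
  assumes X: "homogeneous m a X" and Y: "homogeneous m b Y" and Z: "homogeneous m c Z"
    and "a \<le> 1" "b \<le> 1" "c \<le> 1"
  shows "sbr m n (sbr m n X Y) Z =
    (\<lambda>p q. sbr m n X (sbr m n Y Z) p q + - ((-1) ^ (a * b)) * sbr m n Y (sbr m n X Z) p q)"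
proof -
  note outer = sbr_homogeneous[OF homogeneous_sbr[OF X Y] Z]
    sbr_homogeneous[OF X homogeneous_sbr[OF Y Z]] sbr_homogeneous[OF Y homogeneous_sbr[OF X Z]]
  note inner = sbr_homogeneous[OF X Y] sbr_homogeneous[OF Y Z] sbr_homogeneous[OF X Z]
  show ?thesis
    unfolding outer unfolding inner mat_mult_diff_left mat_mult_diff_right mat_mult_assoc
    using \<open>a \<le> 1\<close> \<open>b \<le> 1\<close> \<open>c \<le> 1\<close>
    by (cases a; cases b; cases c) (auto intro!: ext simp: algebra_simps)
qed

lemma sbr_unit_mat:
  "sbr m n (unit_mat i j a) (unit_mat k l b) = (\<lambda>p q.
     (if p = i \<and> q = l \<and> j = k \<and> 1 \<le> j \<and> j \<le> m+n then a * b else 0)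
   - (if p = k \<and> q = j \<and> l = i \<and> 1 \<le> i \<and> i \<le> m+n
      then (-1) ^ (tau m i j * tau m k l) * (b * a) else 0))"
proof (intro ext)
  fix p q
  have "(\<Sum>r\<in>{1..m+n}. unit_mat i j a p r * unit_mat k l b r q)
     = (\<Sum>r\<in>{1..m+n}. if r = j then (if p = i \<and> q = l \<and> j = k then a * b else 0) else 0)"
    by (rule sum.cong) (auto simp: unit_mat_def)
  moreover
  have "(\<Sum>r\<in>{1..m+n}. (-1) ^ (tau m r q * tau m p r) * (unit_mat k l b p r * unit_mat i j a r q))
     = (\<Sum>r\<in>{1..m+n}. if r = i then (if p = k \<and> q = j \<and> l = i
          then (-1) ^ (tau m i j * tau m k l) * (b * a) else 0) else 0)"
    by (rule sum.cong) (auto simp: unit_mat_def mult.commute)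
  ultimately show "sbr m n (unit_mat i j a) (unit_mat k l b) p q =
     (if p = i \<and> q = l \<and> j = k \<and> 1 \<le> j \<and> j \<le> m+n then a * b else 0)
   - (if p = k \<and> q = j \<and> l = i \<and> 1 \<le> i \<and> i \<le> m+n
      then (-1) ^ (tau m i j * tau m k l) * (b * a) else 0)"
    unfolding sbr_def sum_subtractf by (simp add: sum.delta)
qed

section \<open>The homomorphism \<open>\<psi>\<close> is well defined on \<open>stl(m,n,A)\<close>\<close>

lemma deg_le_1: "deg m x \<le> 1"
  by (induction x) (auto simp: tau_def)

lemma homogeneous_psi: "monomial x \<Longrightarrow> homogeneous m (deg m x) (psi m n smult x)"
proof (induction x)
  case (Gen i j a)
  then show ?case by (simp add: homogeneous_def unit_mat_def)
next
  case (Br x y)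
  then show ?case using homogeneous_sbr by simp
qed auto

lemma Kalgebra_module: "Kalgebra smult \<Longrightarrow> module smult"
  by (simp add: Kalgebra_def)

lemma Kalgebra_scale_neg1_power:
  assumes "Kalgebra smult"
  shows "smult ((-1) ^ e) w = (-1) ^ e * w"
proof -
  interpret module smult using Kalgebra_module[OF assms] .
  show ?thesis
    by (induction e arbitrary: w) (simp_all add: scale_scale[symmetric] scale_minus_left)
qed

lemma psi_stl_eq:
  assumes alg: "Kalgebra smult"
  shows "stl_eq m n smult x y \<Longrightarrow> psi m n smult x = psi m n smult y"
proof (induction rule: stl_eq.induct)
  interpret module smult using Kalgebra_module[OF alg] .
  have scale_mult: "\<And>c x y. smult c x * y = smult c (x * y)" "\<And>c x y. x * smult c y = smult c (x * y)"
    using alg unfolding Kalgebra_def by metis+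
  {
    case (add_assoc x y z) then show ?case by (auto simp: add.assoc)
  next
    case (add_comm x y) then show ?case by (auto simp: add.commute)
  next
    case (add_neg x) then show ?case by auto
  next
    case (smul_add c x y) then show ?case by (auto simp: scale_right_distrib)
  next
    case (add_smul c d x) then show ?case by (auto simp: scale_left_distrib)
  next
    case (smul_smul c d x) then show ?case by auto
  next
    case (smul_one x) then show ?case by auto
  next
    case (br_add_left x y z) then show ?case
      by (auto intro!: ext simp: sbr_def sum.distrib[symmetric] algebra_simps)
  next
    case (br_add_right x y z) then show ?case
      by (auto intro!: ext simp: sbr_def sum.distrib[symmetric] algebra_simps)
  next
    case (br_smul_left c x y) then show ?case
      by (auto intro!: ext simp: sbr_def scale_sum_right scale_right_diff_distrib scale_mult)
  next
    case (br_smul_right c x y) then show ?case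
      by (auto intro!: ext simp: sbr_def scale_sum_right scale_right_diff_distrib scale_mult)
  next
    case (leibniz a b c)
    then show ?case
      using sbr_leibniz[OF homogeneous_psi homogeneous_psi homogeneous_psi deg_le_1 deg_le_1 deg_le_1]
      by (simp add: Kalgebra_scale_neg1_power[OF alg])
  next
    case (rel1_add i j a b) then show ?case by (auto intro!: ext simp: unit_mat_def)
  next
    case (rel1_smul i j c a) then show ?case by (auto intro!: ext simp: unit_mat_def)
  next
    case (rel2 i j k l a b) then show ?case by (auto intro!: ext simp: sbr_unit_mat)
  next
    case (rel3 i j k l a b) then show ?case
      by (simp add: sbr_unit_mat) (auto intro!: ext simp: unit_mat_def valid_idx_def)
  next
    case (rel4 i j k l a b) then show ?case
      by (simp add: sbr_unit_mat)
        (auto intro!: ext simp: unit_mat_def valid_idx_def Kalgebra_scale_neg1_power[OF alg])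
  }
qed auto

section \<open>\<open>stl(m,n,A)\<close> is spanned by the generators and \<open>H\<close>\<close>

definition gens :: "nat \<Rightarrow> nat \<Rightarrow> ('k, 'a) lterm set" where
  "gens m n = {Gen i j a | i j a. valid_idx m n i j}"

definition hgens :: "nat \<Rightarrow> nat \<Rightarrow> ('k, 'a) lterm set" where
  "hgens m n = {Br (Gen i j a) (Gen j i b) | i j a b. valid_idx m n i j}"

inductive_set term_span :: "('k, 'a) lterm set \<Rightarrow> ('k, 'a) lterm set" for S where
  span_base: "x \<in> S \<Longrightarrow> x \<in> term_span S"
| span_zero: "Zero \<in> term_span S"
| span_add: "x \<in> term_span S \<Longrightarrow> y \<in> term_span S \<Longrightarrow> Add x y \<in> term_span S"
| span_smul: "x \<in> term_span S \<Longrightarrow> Smul c x \<in> term_span S"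

lemma valid_idx_sym: "valid_idx m n i j \<Longrightarrow> valid_idx m n j i"
  unfolding valid_idx_def by auto

lemma obtain_third_index:
  fixes m n i j :: nat
  assumes "m + n \<ge> 3"
  obtains p where "1 \<le> p" "p \<le> m + n" "p \<noteq> i" "p \<noteq> j"
proof -
  consider "1 \<noteq> i \<and> 1 \<noteq> j" | "2 \<noteq> i \<and> 2 \<noteq> j" | "3 \<noteq> i \<and> 3 \<noteq> j"
    by fastforce
  then show ?thesis
    by cases (use assms that[of 1] that[of 2] that[of 3] in auto)
qed

fun gen_sum :: "(nat \<times> nat) list \<Rightarrow> (nat \<Rightarrow> nat \<Rightarrow> 'a) \<Rightarrow> ('k, 'a) lterm" where
  "gen_sum [] f = Zero"
| "gen_sum ((i, j) # ps) f = Add (Gen i j (f i j)) (gen_sum ps f)"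

definition index_pairs :: "nat \<Rightarrow> nat \<Rightarrow> (nat \<times> nat) list" where
  "index_pairs m n = filter (\<lambda>(i, j). i \<noteq> j) (List.product [1..<m+n+1] [1..<m+n+1])"

lemma distinct_index_pairs: "distinct (index_pairs m n)"
  by (simp add: index_pairs_def distinct_product)

lemma set_index_pairs: "set (index_pairs m n) = {(i, j). valid_idx m n i j}"
  by (auto simp: index_pairs_def valid_idx_def)

context
  fixes m n :: nat and smult :: "'k::field \<Rightarrow> 'a::ring_1 \<Rightarrow> 'a"
begin

abbreviation stl_equiv :: "('k, 'a) lterm \<Rightarrow> ('k, 'a) lterm \<Rightarrow> bool" (infix "\<approx>" 50) where
  "x \<approx> y \<equiv> stl_eq m n smult x y"

declare stl_eq.trans [trans]

lemma smul_0_eq_Zero: "Smul 0 x \<approx> Zero"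
proof -
  let ?u = "Smul 0 x"
  have "?u \<approx> Add ?u Zero"
    by (rule stl_eq.sym, rule stl_eq.add_zero)
  also have "\<dots> \<approx> Add ?u (Add ?u (Smul (-1) ?u))"
    by (intro stl_eq.cong_add stl_eq.refl stl_eq.sym[OF stl_eq.add_neg])
  also have "\<dots> \<approx> Add (Add ?u ?u) (Smul (-1) ?u)"
    by (rule stl_eq.sym, rule stl_eq.add_assoc)
  also have "\<dots> \<approx> Add (Smul (0 + 0) x) (Smul (-1) ?u)"
    by (intro stl_eq.cong_add stl_eq.refl stl_eq.sym[OF stl_eq.add_smul])
  also have "\<dots> \<approx> Zero"
    using stl_eq.add_neg by simp
  finally show ?thesis .
qed

lemma smul_Zero: "Smul c Zero \<approx> Zero"
proof -
  have "Smul c Zero \<approx> Smul c (Smul 0 Zero)"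
    by (intro stl_eq.cong_smul stl_eq.sym[OF smul_0_eq_Zero])
  also have "\<dots> \<approx> Smul (c * 0) Zero"
    by (rule stl_eq.smul_smul)
  also have "\<dots> \<approx> Zero"
    using smul_0_eq_Zero by simp
  finally show ?thesis .
qed

lemma br_Zero_right: "Br x Zero \<approx> Zero"
proof -
  have "Br x Zero \<approx> Br x (Smul 0 Zero)"
    by (intro stl_eq.cong_br stl_eq.refl stl_eq.sym[OF smul_0_eq_Zero])
  also have "\<dots> \<approx> Smul 0 (Br x Zero)"
    by (rule stl_eq.br_smul_right)
  also have "\<dots> \<approx> Zero"
    by (rule smul_0_eq_Zero)
  finally show ?thesis .
qed

lemma br_Zero_left: "Br Zero x \<approx> Zero"
proof -
  have "Br Zero x \<approx> Br (Smul 0 Zero) x"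
    by (intro stl_eq.cong_br stl_eq.refl stl_eq.sym[OF smul_0_eq_Zero])
  also have "\<dots> \<approx> Smul 0 (Br Zero x)"
    by (rule stl_eq.br_smul_left)
  also have "\<dots> \<approx> Zero"
    by (rule smul_0_eq_Zero)
  finally show ?thesis .
qed

lemma Zero_add: "Add Zero x \<approx> x"
  by (rule stl_eq.trans[OF stl_eq.add_comm stl_eq.add_zero])

lemma add_add_swap: "Add (Add a b) (Add c d) \<approx> Add (Add a c) (Add b d)"
proof -
  have "Add (Add a b) (Add c d) \<approx> Add a (Add (Add b c) d)"
    by (rule stl_eq.trans[OF stl_eq.add_assoc],
        intro stl_eq.cong_add stl_eq.refl stl_eq.sym[OF stl_eq.add_assoc])
  also have "\<dots> \<approx> Add a (Add (Add c b) d)"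
    by (intro stl_eq.cong_add stl_eq.refl stl_eq.add_comm)
  also have "\<dots> \<approx> Add (Add a c) (Add b d)"
    by (rule stl_eq.trans[OF _ stl_eq.sym[OF stl_eq.add_assoc]],
        intro stl_eq.cong_add stl_eq.refl stl_eq.add_assoc)
  finally show ?thesis .
qed

lemma Gen_0: "valid_idx m n i j \<Longrightarrow> Gen i j 0 \<approx> Zero"
proof -
  assume v: "valid_idx m n i j"
  let ?G = "Gen i j 0 :: ('k, 'a) lterm"
  have "Zero \<approx> Add ?G (Smul (-1) ?G)"
    by (rule stl_eq.sym[OF stl_eq.add_neg])
  also have "\<dots> \<approx> Add (Add ?G ?G) (Smul (-1) ?G)"
    using stl_eq.rel1_add[OF v, where a=0 and b=0] by (intro stl_eq.cong_add stl_eq.refl) simp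
  also have "\<dots> \<approx> Add ?G (Add ?G (Smul (-1) ?G))"
    by (rule stl_eq.add_assoc)
  also have "\<dots> \<approx> ?G"
    by (rule stl_eq.trans[OF _ stl_eq.add_zero], intro stl_eq.cong_add stl_eq.refl stl_eq.add_neg)
  finally show ?thesis
    by (rule stl_eq.sym)
qed

lemma leibniz_right:
  assumes "monomial a" "monomial b" "monomial c"
  shows "Br a (Br b c) \<approx> Add (Br (Br a b) c) (Smul ((-1) ^ (deg m a * deg m b)) (Br b (Br a c)))"
proof -
  let ?s = "(-1) ^ (deg m a * deg m b) :: 'k" and ?T = "Br b (Br a c)"
  have "Add (Br (Br a b) c) (Smul ?s ?T) \<approx> Add (Add (Br a (Br b c)) (Smul (- ?s) ?T)) (Smul ?s ?T)"
    by (intro stl_eq.cong_add stl_eq.refl stl_eq.leibniz assms)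
  also have "\<dots> \<approx> Add (Br a (Br b c)) (Add (Smul (- ?s) ?T) (Smul ?s ?T))"
    by (rule stl_eq.add_assoc)
  also have "\<dots> \<approx> Add (Br a (Br b c)) (Smul (- ?s + ?s) ?T)"
    by (intro stl_eq.cong_add stl_eq.refl stl_eq.sym[OF stl_eq.add_smul])
  also have "\<dots> \<approx> Br a (Br b c)"
    using stl_eq.trans[OF stl_eq.cong_add[OF stl_eq.refl smul_0_eq_Zero] stl_eq.add_zero] by simp
  finally show ?thesis
    by (rule stl_eq.sym)
qed

definition spanned :: "('k, 'a) lterm set \<Rightarrow> ('k, 'a) lterm \<Rightarrow> bool" where
  "spanned S x \<longleftrightarrow> (\<exists>w \<in> term_span S. x \<approx> w)"

lemma spanned_cong: "x \<approx> y \<Longrightarrow> spanned S y \<Longrightarrow> spanned S x"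
  unfolding spanned_def by (auto intro: stl_eq.trans)

lemma spanned_base: "x \<in> S \<Longrightarrow> spanned S x"
  unfolding spanned_def by (auto intro: stl_eq.refl term_span.intros)

lemma spanned_Zero: "spanned S Zero"
  unfolding spanned_def by (auto intro: stl_eq.refl term_span.intros)

lemma spanned_add: "spanned S x \<Longrightarrow> spanned S y \<Longrightarrow> spanned S (Add x y)"
  unfolding spanned_def by (auto intro: stl_eq.cong_add term_span.intros)

lemma spanned_smul: "spanned S x \<Longrightarrow> spanned S (Smul c x)"
  unfolding spanned_def by (auto intro: stl_eq.cong_smul term_span.intros)

lemma term_span_mono: "x \<in> term_span S \<Longrightarrow> S \<subseteq> T \<Longrightarrow> x \<in> term_span T"
  by (induction rule: term_span.induct) (auto intro: term_span.intros)

lemma spanned_mono: "S \<subseteq> T \<Longrightarrow> spanned S x \<Longrightarrow> spanned T x"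
  unfolding spanned_def using term_span_mono by blast

lemma spanned_br_right:
  assumes "spanned T y" and "\<And>t. t \<in> T \<Longrightarrow> spanned S (Br x t)"
  shows "spanned S (Br x y)"
proof -
  obtain w where w: "w \<in> term_span T" "y \<approx> w"
    using assms(1) unfolding spanned_def by blast
  from w(1) have "spanned S (Br x w)"
  proof induction
    case (span_add u v)
    then show ?case using spanned_cong[OF stl_eq.br_add_right spanned_add] by blast
  next
    case (span_smul u c)
    then show ?case using spanned_cong[OF stl_eq.br_smul_right spanned_smul] by blast
  qed (auto intro: assms(2) spanned_cong[OF br_Zero_right spanned_Zero])
  then show ?thesis
    by (rule spanned_cong[rotated]) (intro stl_eq.cong_br stl_eq.refl w(2))
qed

lemma spanned_br_left:
  assumes "spanned T y" and "\<And>t. t \<in> T \<Longrightarrow> spanned S (Br t x)"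
  shows "spanned S (Br y x)"
proof -
  obtain w where w: "w \<in> term_span T" "y \<approx> w"
    using assms(1) unfolding spanned_def by blast
  from w(1) have "spanned S (Br w x)"
  proof induction
    case (span_add u v)
    then show ?case using spanned_cong[OF stl_eq.br_add_left spanned_add] by blast
  next
    case (span_smul u c)
    then show ?case using spanned_cong[OF stl_eq.br_smul_left spanned_smul] by blast
  qed (auto intro: assms(2) spanned_cong[OF br_Zero_left spanned_Zero])
  then show ?thesis
    by (rule spanned_cong[rotated]) (intro stl_eq.cong_br stl_eq.refl w(2))
qed

lemma gens_hgens_cases:
  assumes "t \<in> gens m n \<union> hgens m n"
  obtains i j a where "valid_idx m n i j" "t = Gen i j a"
  | i j a b where "valid_idx m n i j" "t = Br (Gen i j a) (Gen j i b)"
  using assms unfolding gens_def hgens_def by blast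

lemma spanned_gens_Gen: "valid_idx m n i j \<Longrightarrow> spanned (gens m n) (Gen i j a)"
  by (rule spanned_base) (auto simp: gens_def)

lemma spanned_hgens_H: "valid_idx m n i j \<Longrightarrow> spanned (hgens m n) (Br (Gen i j a) (Gen j i b))"
  by (rule spanned_base) (auto simp: hgens_def)

lemma spanned_br_Gen_Gen_gens:
  assumes "valid_idx m n i j" "valid_idx m n k l" "\<not> (i = l \<and> j = k)"
  shows "spanned (gens m n) (Br (Gen i j a) (Gen k l b))"
proof (cases "i = l")
  case True
  with assms have "valid_idx m n k j" "j \<noteq> k"
    unfolding valid_idx_def by auto
  with True assms show ?thesis
    by (intro spanned_cong[OF stl_eq.rel4] spanned_smul spanned_gens_Gen) auto
next
  case False
  show ?thesis
  proof (cases "j = k")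
    case True
    with False assms have "valid_idx m n i l"
      unfolding valid_idx_def by auto
    with True False assms show ?thesis
      by (intro spanned_cong[OF stl_eq.rel3] spanned_gens_Gen) auto
  next
    case False2: False
    with False assms show ?thesis
      by (intro spanned_cong[OF stl_eq.rel2] spanned_Zero) auto
  qed
qed

lemma spanned_br_Gen_Gen:
  assumes "valid_idx m n i j" "valid_idx m n k l"
  shows "spanned (gens m n \<union> hgens m n) (Br (Gen i j a) (Gen k l b))"
proof (cases "i = l \<and> j = k")
  case True
  with assms show ?thesis
    using spanned_mono[OF _ spanned_hgens_H] by blast
next
  case False
  with assms show ?thesis
    using spanned_mono[OF _ spanned_br_Gen_Gen_gens] by blast
qed

lemma spanned_br_Gen_gens:
  assumes "valid_idx m n k l" "spanned (gens m n) y"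
  shows "spanned (gens m n \<union> hgens m n) (Br (Gen k l c) y)"
    and "spanned (gens m n \<union> hgens m n) (Br y (Gen k l c))"
  using assms spanned_br_Gen_Gen
  by (auto simp: gens_def intro: spanned_br_right spanned_br_left)

lemma spanned_br_H_Gen_distinct:
  assumes "valid_idx m n i j" "valid_idx m n k l" "\<not> (k = i \<and> l = j)" "\<not> (k = j \<and> l = i)"
  shows "spanned (gens m n \<union> hgens m n) (Br (Br (Gen i j a) (Gen j i b)) (Gen k l c))"
proof -
  note leibniz = stl_eq.leibniz[where a="Gen i j a" and b="Gen j i b" and c="Gen k l c"
      and m=m and n=n and smult=smult, simplified]
  show ?thesis
    using assms valid_idx_sym[OF assms(1)]
    by (intro spanned_cong[OF leibniz] spanned_add spanned_smul spanned_br_Gen_gens(1)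
        spanned_br_Gen_Gen_gens) auto
qed

lemma spanned_br_Gen_H_distinct:
  assumes "valid_idx m n i j" "valid_idx m n k l" "\<not> (k = i \<and> l = j)" "\<not> (k = j \<and> l = i)"
  shows "spanned (gens m n \<union> hgens m n) (Br (Gen k l c) (Br (Gen i j a) (Gen j i b)))"
proof -
  note leibniz = leibniz_right[where a="Gen k l c" and b="Gen i j a" and c="Gen j i b", simplified]
  show ?thesis
    using assms valid_idx_sym[OF assms(1)]
    by (intro spanned_cong[OF leibniz] spanned_add spanned_smul spanned_br_Gen_gens
        spanned_br_Gen_Gen_gens) auto
qed

text \<open>This is where \<open>m + n \<ge> 3\<close> enters: writing \<open>v\<^sub>i\<^sub>j(a) = [v\<^sub>i\<^sub>p(a), v\<^sub>p\<^sub>j(1)]\<close> for a third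
  index \<open>p\<close> and expanding by the Leibniz identity moves \<open>H\<^sub>i\<^sub>j\<close> onto index pairs that
  differ from \<open>(i,j)\<close> and \<open>(j,i)\<close>.\<close>

lemma H_through_third_index:
  assumes mn: "m + n \<ge> 3" and v: "valid_idx m n i j"
  obtains p d where "valid_idx m n i p" "valid_idx m n p j" "p \<noteq> i" "p \<noteq> j"
    "Br (Gen i j a) (Gen j i b) \<approx>
      Add (Br (Gen i p a) (Gen p i b)) (Smul d (Br (Gen p j 1) (Gen j p (b * a))))"
proof -
  obtain p where p: "1 \<le> p" "p \<le> m + n" "p \<noteq> i" "p \<noteq> j"
    using obtain_third_index[OF mn] .
  have vip: "valid_idx m n i p" and vpj: "valid_idx m n p j" and vji: "valid_idx m n j i"
    using v p unfolding valid_idx_def by auto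
  let ?c1 = "- ((-1) ^ (tau m i p * tau m p j)) :: 'k"
  let ?c2 = "- ((-1) ^ (tau m i p * tau m j i)) :: 'k"
  have "Br (Gen i j a) (Gen j i b) \<approx> Br (Br (Gen i p a) (Gen p j 1)) (Gen j i b)"
    using stl_eq.rel3[OF vip vpj, where a=a and b=1] v
    by (intro stl_eq.cong_br[OF stl_eq.sym stl_eq.refl]) (simp add: valid_idx_def)
  also have "\<dots> \<approx> Add (Br (Gen i p a) (Br (Gen p j 1) (Gen j i b)))
      (Smul ?c1 (Br (Gen p j 1) (Br (Gen i p a) (Gen j i b))))"
    using stl_eq.leibniz[where a="Gen i p a" and b="Gen p j 1" and c="Gen j i b"] by simp
  also have "\<dots> \<approx> Add (Br (Gen i p a) (Gen p i b))
      (Smul ?c1 (Br (Gen p j 1) (Smul ?c2 (Gen j p (b * a)))))"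
    using stl_eq.rel3[OF vpj vji, where a=1 and b=b] stl_eq.rel4[OF vip vji, where a=a and b=b] p
    by (intro stl_eq.cong_add stl_eq.cong_smul stl_eq.cong_br stl_eq.refl) simp_all
  also have "\<dots> \<approx> Add (Br (Gen i p a) (Gen p i b))
      (Smul (?c1 * ?c2) (Br (Gen p j 1) (Gen j p (b * a))))"
    by (intro stl_eq.cong_add stl_eq.refl stl_eq.trans[OF stl_eq.cong_smul stl_eq.smul_smul]
        stl_eq.br_smul_right)
  finally show ?thesis
    using that vip vpj p(3,4) by blast
qed

lemma spanned_br_H_Gen:
  assumes mn: "m + n \<ge> 3" and v: "valid_idx m n i j" "valid_idx m n k l"
  shows "spanned (gens m n \<union> hgens m n) (Br (Br (Gen i j a) (Gen j i b)) (Gen k l c))"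
proof (cases "(k = i \<and> l = j) \<or> (k = j \<and> l = i)")
  case False
  with v show ?thesis
    using spanned_br_H_Gen_distinct by blast
next
  case True
  obtain p d where "valid_idx m n i p" "valid_idx m n p j" "p \<noteq> i" "p \<noteq> j"
    and d: "Br (Gen i j a) (Gen j i b) \<approx>
      Add (Br (Gen i p a) (Gen p i b)) (Smul d (Br (Gen p j 1) (Gen j p (b * a))))"
    by (rule H_through_third_index[OF mn v(1)])
  with True v(2) show ?thesis
    by (intro spanned_cong[OF stl_eq.cong_br[OF d stl_eq.refl]]
        spanned_cong[OF stl_eq.br_add_left] spanned_cong[OF stl_eq.br_smul_left]
        spanned_add spanned_smul spanned_br_H_Gen_distinct) auto
qed

lemma spanned_br_Gen_H:
  assumes mn: "m + n \<ge> 3" and v: "valid_idx m n i j" "valid_idx m n k l"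
  shows "spanned (gens m n \<union> hgens m n) (Br (Gen k l c) (Br (Gen i j a) (Gen j i b)))"
proof (cases "(k = i \<and> l = j) \<or> (k = j \<and> l = i)")
  case False
  with v show ?thesis
    using spanned_br_Gen_H_distinct by blast
next
  case True
  obtain p d where "valid_idx m n i p" "valid_idx m n p j" "p \<noteq> i" "p \<noteq> j"
    and d: "Br (Gen i j a) (Gen j i b) \<approx>
      Add (Br (Gen i p a) (Gen p i b)) (Smul d (Br (Gen p j 1) (Gen j p (b * a))))"
    by (rule H_through_third_index[OF mn v(1)])
  with True v(2) show ?thesis
    by (intro spanned_cong[OF stl_eq.cong_br[OF stl_eq.refl d]]
        spanned_cong[OF stl_eq.br_add_right] spanned_cong[OF stl_eq.br_smul_right]
        spanned_add spanned_smul spanned_br_Gen_H_distinct) auto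
qed

lemma spanned_br_Gen:
  assumes "m + n \<ge> 3" "valid_idx m n k l" "spanned (gens m n \<union> hgens m n) y"
  shows "spanned (gens m n \<union> hgens m n) (Br (Gen k l c) y)"
  using assms(3) by (rule spanned_br_right, elim gens_hgens_cases)
    (auto intro: spanned_br_Gen_Gen[OF assms(2)] spanned_br_Gen_H[OF assms(1) _ assms(2)])

lemma spanned_br_H_H:
  assumes mn: "m + n \<ge> 3" and v: "valid_idx m n i j" "valid_idx m n k l"
  shows "spanned (gens m n \<union> hgens m n)
    (Br (Br (Gen i j a) (Gen j i b)) (Br (Gen k l c) (Gen l k d)))"
proof -
  note leibniz = stl_eq.leibniz[where a="Gen i j a" and b="Gen j i b"
      and c="Br (Gen k l c) (Gen l k d)" and m=m and n=n and smult=smult, simplified]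
  show ?thesis
    using v valid_idx_sym[OF v(1)]
    by (intro spanned_cong[OF leibniz] spanned_add spanned_smul spanned_br_Gen[OF mn]
        spanned_br_Gen_H[OF mn])
qed

lemma spanned_br:
  assumes mn: "m + n \<ge> 3"
    and "spanned (gens m n \<union> hgens m n) x" and y: "spanned (gens m n \<union> hgens m n) y"
  shows "spanned (gens m n \<union> hgens m n) (Br x y)"
  using assms(2)
proof (rule spanned_br_left)
  fix t :: "('k, 'a) lterm"
  assume "t \<in> gens m n \<union> hgens m n"
  then show "spanned (gens m n \<union> hgens m n) (Br t y)"
  proof (cases rule: gens_hgens_cases)
    case (1 i j a)
    then show ?thesis
      using spanned_br_Gen[OF mn _ y] by simp
  next
    case (2 i j a b)
    show ?thesis
      unfolding \<open>t = _\<close> using y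
      by (rule spanned_br_right, elim gens_hgens_cases)
        (auto intro: spanned_br_H_Gen[OF mn \<open>valid_idx m n i j\<close>]
          spanned_br_H_H[OF mn \<open>valid_idx m n i j\<close>])
  qed
qed

lemma spanned_wf_term:
  assumes "m + n \<ge> 3"
  shows "wf_term m n x \<Longrightarrow> spanned (gens m n \<union> hgens m n) x"
proof (induction x)
  case (Gen i j a)
  then show ?case
    using spanned_mono[OF _ spanned_gens_Gen] by auto
qed (auto intro: spanned_Zero spanned_add spanned_smul spanned_br[OF assms])

section \<open>Coordinates on the span of the generators\<close>

lemma gen_sum_eq_Zero:
  "\<forall>(i, j) \<in> set ps. valid_idx m n i j \<and> f i j = 0 \<Longrightarrow> gen_sum ps f \<approx> Zero"
proof (induction ps)
  case Nil
  then show ?case by (simp add: stl_eq.refl)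
next
  case (Cons p ps)
  then show ?case
    by (cases p) (auto intro: stl_eq.trans[OF stl_eq.cong_add[OF Gen_0] stl_eq.add_zero])
qed

lemma gen_sum_add:
  "\<forall>(i, j) \<in> set ps. valid_idx m n i j \<Longrightarrow>
    gen_sum ps (\<lambda>p q. f p q + g p q) \<approx> Add (gen_sum ps f) (gen_sum ps g)"
proof (induction ps)
  case Nil
  then show ?case by (simp add: stl_eq.sym[OF stl_eq.add_zero])
next
  case (Cons p ps)
  then show ?case
    by (cases p) (auto intro: stl_eq.trans[OF stl_eq.cong_add add_add_swap] stl_eq.rel1_add)
qed

lemma gen_sum_smult:
  "\<forall>(i, j) \<in> set ps. valid_idx m n i j \<Longrightarrow>
    gen_sum ps (\<lambda>p q. smult c (f p q)) \<approx> Smul c (gen_sum ps f)"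
proof (induction ps)
  case Nil
  then show ?case by (simp add: stl_eq.sym[OF smul_Zero])
next
  case (Cons p ps)
  then show ?case
    by (cases p)
      (auto intro: stl_eq.trans[OF stl_eq.cong_add stl_eq.sym[OF stl_eq.smul_add]] stl_eq.rel1_smul)
qed

lemma gen_sum_unit_mat:
  "distinct ps \<Longrightarrow> \<forall>(i, j) \<in> set ps. valid_idx m n i j \<Longrightarrow> (k, l) \<in> set ps \<Longrightarrow>
    gen_sum ps (unit_mat k l a) \<approx> Gen k l a"
proof (induction ps)
  case (Cons p ps)
  show ?case
  proof (cases "p = (k, l)")
    case True
    with Cons.prems have "gen_sum ps (unit_mat k l a) \<approx> Zero"
      by (intro gen_sum_eq_Zero) (auto simp: unit_mat_def)
    with True show ?thesis
      by (auto intro: stl_eq.trans[OF stl_eq.cong_add[OF stl_eq.refl] stl_eq.add_zero]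
          simp: unit_mat_def)
  next
    case False
    with Cons obtain i j where "p = (i, j)" "valid_idx m n i j"
      "unit_mat k l a i j = 0" "gen_sum ps (unit_mat k l a) \<approx> Gen k l a"
      by (cases p) (auto simp: unit_mat_def)
    then show ?thesis
      by (auto intro: stl_eq.trans[OF stl_eq.cong_add[OF Gen_0] Zero_add])
  qed
qed simp

lemma gen_sum_psi_term_span_gens:
  assumes "g \<in> term_span (gens m n)"
  shows "gen_sum (index_pairs m n) (psi m n smult g) \<approx> g"
  using assms
proof induction
  case (span_base x)
  then obtain i j a where "valid_idx m n i j" "x = Gen i j a"
    unfolding gens_def by blast
  then show ?case
    by (simp add: gen_sum_unit_mat distinct_index_pairs set_index_pairs)
next
  case span_zero
  show ?case
    by (simp add: gen_sum_eq_Zero set_index_pairs)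
next
  case (span_add x y)
  then show ?case
    using gen_sum_add[of "index_pairs m n" "psi m n smult x" "psi m n smult y"]
    by (auto simp: set_index_pairs intro: stl_eq.trans[OF _ stl_eq.cong_add])
next
  case (span_smul x c)
  then show ?case
    using gen_sum_smult[of "index_pairs m n" c "psi m n smult x"]
    by (auto simp: set_index_pairs intro: stl_eq.trans[OF _ stl_eq.cong_smul])
qed

lemma term_span_gens_eq_Zero:
  assumes "g \<in> term_span (gens m n)" "\<And>i j. valid_idx m n i j \<Longrightarrow> psi m n smult g i j = 0"
  shows "g \<approx> Zero"
proof -
  have "g \<approx> gen_sum (index_pairs m n) (psi m n smult g)"
    by (rule stl_eq.sym[OF gen_sum_psi_term_span_gens[OF assms(1)]])
  also have "\<dots> \<approx> Zero"
    using assms(2) by (intro gen_sum_eq_Zero) (auto simp: set_index_pairs)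
  finally show ?thesis .
qed

lemma term_span_Un_decompose:
  assumes "x \<in> term_span (A \<union> B)"
  obtains a b where "a \<in> term_span A" "b \<in> term_span B" "x \<approx> Add a b"
  using assms
proof (induction arbitrary: thesis)
  case (span_base x)
  then show ?case
    by (auto intro: term_span.intros stl_eq.sym[OF stl_eq.add_zero] stl_eq.sym[OF Zero_add])
next
  case span_zero
  then show ?case
    by (auto intro: term_span.intros stl_eq.sym[OF stl_eq.add_zero])
next
  case (span_add x y)
  obtain a1 b1 where "a1 \<in> term_span A" "b1 \<in> term_span B" "x \<approx> Add a1 b1"
    by (rule span_add.IH(1))
  moreover obtain a2 b2 where "a2 \<in> term_span A" "b2 \<in> term_span B" "y \<approx> Add a2 b2"
    by (rule span_add.IH(2))
  ultimately show ?case
    by (intro span_add.prems[of "Add a1 a2" "Add b1 b2"] term_span.span_add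
        stl_eq.trans[OF stl_eq.cong_add add_add_swap])
next
  case (span_smul x c)
  obtain a b where "a \<in> term_span A" "b \<in> term_span B" "x \<approx> Add a b"
    by (rule span_smul.IH)
  then show ?case
    by (intro span_smul.prems[of "Smul c a" "Smul c b"] term_span.span_smul
        stl_eq.trans[OF stl_eq.cong_smul stl_eq.smul_add])
qed

end

lemma term_span_hgens_subset_Hspan: "x \<in> term_span (hgens m n) \<Longrightarrow> x \<in> Hspan m n"
  by (induction rule: term_span.induct) (auto simp: hgens_def intro: Hspan.intros)

lemma wf_term_Hspan: "h \<in> Hspan m n \<Longrightarrow> wf_term m n h"
  by (induction rule: Hspan.induct) (auto dest: valid_idx_sym)

lemma psi_Hspan_offdiag:
  assumes "Kalgebra smult" "h \<in> Hspan m n" "p \<noteq> q"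
  shows "psi m n smult h p q = 0"
  using assms(2,3)
proof induction
  case (H_gen i j a b)
  then show ?case by (auto simp: sbr_unit_mat)
next
  case (H_smul x c)
  then show ?case using module.scale_zero_right[OF Kalgebra_module[OF assms(1)]] by simp
qed auto

theorem lemma3p3:
  fixes m n :: nat
    and smult :: "'k::field \<Rightarrow> 'a::ring_1 \<Rightarrow> 'a"
    and x :: "('k, 'a) lterm"
  assumes charK: "(2::'k) \<noteq> 0" "(3::'k) \<noteq> 0"
    and alg: "Kalgebra smult"
    and mn: "m + n \<ge> 3"
    and wf: "wf_term m n x"
    and ker: "psi m n smult x = (\<lambda>p q. 0)"
  shows "\<exists>h \<in> Hspan m n. wf_term m n h \<and> stl_eq m n smult x h"
proof -
  obtain w where "w \<in> term_span (gens m n \<union> hgens m n)" "stl_eq m n smult x w"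
    using spanned_wf_term[OF mn wf] unfolding spanned_def by blast
  then obtain g h where g: "g \<in> term_span (gens m n)" and h: "h \<in> Hspan m n"
    and x_eq: "stl_eq m n smult x (Add g h)"
    by (elim term_span_Un_decompose) (blast intro: stl_eq.trans term_span_hgens_subset_Hspan)
  have "psi m n smult g p q + psi m n smult h p q = 0" for p q
    using psi_stl_eq[OF alg x_eq] ker by (metis psi.simps(3))
  then have "psi m n smult g p q = 0" if "valid_idx m n p q" for p q
    using psi_Hspan_offdiag[OF alg h, of p q] that by (metis add.right_neutral valid_idx_def)
  then have "stl_eq m n smult g Zero"
    by (rule term_span_gens_eq_Zero[OF g])
  then have "stl_eq m n smult x h"
    by (rule stl_eq.trans[OF x_eq stl_eq.trans[OF stl_eq.cong_add[OF _ stl_eq.refl] Zero_add]])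
  with h show ?thesis
    using wf_term_Hspan by blast
qed

end
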